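(* Let $n\ge 1$, $0\le r\le s\le n$ and $0\le k\le n-1$ be integers, with $k\ge 1$ if $r=s$. Then $$M_{r,s}^{n,k}=2\sum_t\sum_j(-1)^j\frac{s-j-r+1+2t}{n-1-j-2t}\binom{k}{2t+1}\binom{k-1-2t}{j}\binom{n-1-j-2t}{s-j}\binom{n-1-j-2t}{r-1-2t}+\frac{s-r}{n-k}\sum_j\binom{k}{j}\binom{n-k}{r-j}\binom{n-k}{s-j},$$ where all sums are over nonnegative integers $t,j$ (only finitely many terms are nonzero). In particular $M_{r,s}^{n,0}=\frac{s-r}{n}\binom{n}{r}\binom{n}{s}$ for $r<s$.
   Context: For $n\ge1$ and $0\le r\le n$, a lattice path from $(0,0)$ to $(r,n-r)$ is a sequence of lattice points $v_0=(0,0),\dots,v_n=(r,n-r)$ with each step $v_i-v_{i-1}\in\{(1,0),(0,1)\}$; its vertex set is $\{v_0,\dots,v_n\}$. $N_k^{n,r}$ denotes the number of ordered pairs of lattice paths from $(0,0)$ to $(r,n-r)$ whose vertex sets share exactly $k$ points other than $(0,0)$ and $(r,n-r)$. For $0\le r<s\le n$, $M_{r,s}^{n,k}$ is the number of pairs $(P,Q)$ with $P$ a lattice path from $(0,0)$ to $(r,n-r)$ and $Q$ a lattice path from $(0,0)$ to $(s,n-s)$ whose vertex sets share exactly $k$ points other than $(0,0)$. For $r=s$ and $k\ge1$, $M_{r,r}^{n,k}:=N_{k-1}^{n,r}$. Binomial coefficients $\binom{a}{b}$ with $a\ge 0$ are $0$ if $b<0$ or $b>a$. *)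

theory Defs
  imports Complex_Main
begin

definition lattice_paths :: "nat \<Rightarrow> nat \<Rightarrow> (nat \<times> nat) list set" where
  "lattice_paths a b = {p. length p = a + b + 1 \<and> p ! 0 = (0,0) \<and> p ! (a + b) = (a, b) \<and>
     (\<forall>i < a + b. p ! Suc i = (fst (p ! i) + 1, snd (p ! i)) \<or>
                   p ! Suc i = (fst (p ! i), snd (p ! i) + 1))}"

definition Npairs :: "nat \<Rightarrow> nat \<Rightarrow> nat \<Rightarrow> nat" where
  "Npairs n r k = card {(P, Q). P \<in> lattice_paths r (n - r) \<and> Q \<in> lattice_paths r (n - r) \<and>
      card (set P \<inter> set Q - {(0,0), (r, n - r)}) = k}"

definition Mpairs :: "nat \<Rightarrow> nat \<Rightarrow> nat \<Rightarrow> nat \<Rightarrow> nat" where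
  "Mpairs n r s k = (if r = s then Npairs n r (k - 1) else
     card {(P, Q). P \<in> lattice_paths r (n - r) \<and> Q \<in> lattice_paths s (n - s) \<and>
      card (set P \<inter> set Q - {(0,0)}) = k})"

definition ibinom :: "int \<Rightarrow> int \<Rightarrow> real" where
  "ibinom a b = (if a < 0 \<or> b < 0 then 0 else real (nat a choose nat b))"

end

(*
  Let G_k(n, r, s) count the pairs of walks of length n from the origin that end at abscissae
  r <= s and share k vertices besides the origin. Appending a step to both walks shows that off
  the diagonal G_k satisfies the free four-term recurrence (its defect vanishes), while on the
  diagonal it is obtained from G_(k-1) by the operator meet_op. Hence G_k = meet_op^k G_0, where
  G_0 is the Lindstrom-Gessel-Viennot determinant lgv_det plus a point mass at n = 0.

  The operators U(1) and U(-1) differ from meet_op and V by the defect, which commutes with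
  meet_op and V and annihilates lgv_det except at n = 1. Telescoping therefore gives
  meet_op^k lgv_det = U(1)^k lgv_det and V^k lgv_det = U(-1)^k lgv_det for n > k, so
  G_k = V^k lgv_det + U(1)^k lgv_det - U(-1)^k lgv_det. As U(c) and V are sums of commuting
  shifts, their powers expand by the binomial theorem into the two sums of the formula.
*)

theory Submission
  imports Defs
begin

lemma ibinom_pascal:
  assumes "1 \<le> m"
  shows "ibinom m a = ibinom (m - 1) a + ibinom (m - 1) (a - 1)"
proof (cases "0 < a")
  case True
  have "nat m choose nat a = (nat m - 1 choose (nat a - 1)) + (nat m - 1 choose nat a)"
    using choose_reduce_nat[of "nat m" "nat a"] True assms by simp
  moreover have "nat (m - 1) = nat m - 1" "nat (a - 1) = nat a - 1"
    using True assms by auto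
  ultimately show ?thesis
    using True assms by (simp add: ibinom_def)
qed (use assms in \<open>auto simp: ibinom_def\<close>)

lemma ibinom_absorb_comp:
  assumes "1 \<le> m"
  shows "of_int m * ibinom (m - 1) a = of_int (m - a) * ibinom m a"
proof -
  consider "a < 0" | "m < a" | "0 \<le> a" "a \<le> m" by linarith
  then show ?thesis
  proof cases
    case 2
    then have "nat m < nat a" "nat (m - 1) < nat a"
      using assms by auto
    then show ?thesis
      by (simp add: ibinom_def binomial_eq_0)
  next
    case 3
    have "real (nat m - nat a) * real (nat m choose nat a) = real (nat m) * real (nat m - 1 choose nat a)"
      by (metis binomial_absorb_comp of_nat_mult)
    moreover have "nat (m - 1) = nat m - 1" "real (nat m - nat a) = of_int (m - a)"
      using 3 assms by (auto simp: nat_diff_distrib)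
    ultimately show ?thesis
      using 3 assms by (simp add: ibinom_def)
  qed (simp add: ibinom_def)
qed

lemma ibinom_absorption:
  assumes "1 \<le> m"
  shows "of_int m * ibinom (m - 1) (a - 1) = of_int a * ibinom m a"
proof (cases "1 \<le> a")
  case True
  have "Suc (nat a - 1) * (nat m choose Suc (nat a - 1)) = nat m * (nat m - 1 choose (nat a - 1))"
    by (rule binomial_absorption)
  moreover have "Suc (nat a - 1) = nat a"
    using True by simp
  ultimately have "real (nat a) * real (nat m choose nat a) = real (nat m) * real (nat m - 1 choose (nat a - 1))"
    by (metis of_nat_mult)
  moreover have "nat (m - 1) = nat m - 1" "nat (a - 1) = nat a - 1"
    using True assms by auto
  ultimately show ?thesis
    using True assms by (simp add: ibinom_def)
qed (cases "a = 0"; simp add: ibinom_def)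

section \<open>Walks and their meetings\<close>

definition step :: "bool \<Rightarrow> nat \<times> nat \<Rightarrow> nat \<times> nat" where
  "step b v = (if b then (fst v + 1, snd v) else (fst v, snd v + 1))"

type_synonym walk = "(nat \<times> nat) list"

definition walks :: "nat \<Rightarrow> walk set" where
  "walks n = {p. length p = n + 1 \<and> p ! 0 = (0, 0) \<and> (\<forall>i < n. \<exists>b. p ! Suc i = step b (p ! i))}"

definition meetings :: "nat \<Rightarrow> walk \<Rightarrow> walk \<Rightarrow> nat" where
  "meetings n P Q = card {i \<in> {1..n}. P ! i = Q ! i}"

definition walk_pairs :: "nat \<Rightarrow> int \<Rightarrow> int \<Rightarrow> nat \<Rightarrow> (walk \<times> walk) set" where
  "walk_pairs n r s k = {(P, Q) \<in> walks n \<times> walks n.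
     int (fst (P ! n)) = r \<and> int (fst (Q ! n)) = s \<and> meetings n P Q = k}"

lemma fst_step: "fst (step b v) = fst v + of_bool b"
  by (simp add: step_def)

lemma step_level: "fst (step b v) + snd (step b v) = fst v + snd v + 1"
  by (simp add: step_def)

lemma step_eq_iff: "step b v = step b' v \<longleftrightarrow> b = b'"
  by (simp add: step_def)

lemma ex_step_iff: "(\<exists>b. w = step b v) \<longleftrightarrow> w = (fst v + 1, snd v) \<or> w = (fst v, snd v + 1)"
  by (metis step_def)

lemma walks_level:
  assumes "P \<in> walks n" "i \<le> n"
  shows "fst (P ! i) + snd (P ! i) = i"
  using assms(2)
proof (induction i)
  case (Suc i)
  then obtain b where "P ! Suc i = step b (P ! i)"
    using assms(1) by (force simp: walks_def Suc_le_eq)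
  then show ?case
    using Suc step_level[of b "P ! i"] by simp
qed (use assms(1) in \<open>simp add: walks_def\<close>)

lemma walks_0: "walks 0 = {[(0, 0)]}"
proof -
  have "length p = 1 \<Longrightarrow> p ! 0 = (0, 0) \<Longrightarrow> p = [(0, 0)]" for p :: walk
    by (cases p) auto
  then show ?thesis
    by (auto simp: walks_def)
qed

lemma walks_Suc:
  "walks (Suc n) = (\<lambda>(P, b). P @ [step b (P ! n)]) ` (walks n \<times> UNIV)"
proof (intro equalityI subsetI)
  fix P' assume P': "P' \<in> walks (Suc n)"
  then have len: "length P' = n + 2"
    by (simp add: walks_def)
  then have "P' = butlast P' @ [P' ! Suc n]"
    by (metis add_2_eq_Suc' append_butlast_last_id diff_Suc_1 last_conv_nth list.size(3) nat.distinct(1))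
  moreover obtain b where "P' ! Suc n = step b (P' ! n)"
    using P' by (auto simp: walks_def)
  moreover have "butlast P' ! i = P' ! i" if "i \<le> n" for i
    using that len by (simp add: nth_butlast)
  moreover from this have "butlast P' \<in> walks n"
    using P' len by (auto simp: walks_def)
  ultimately show "P' \<in> (\<lambda>(P, b). P @ [step b (P ! n)]) ` (walks n \<times> UNIV)"
    by (auto intro!: image_eqI[of _ _ "(butlast P', b)"])
next
  fix P' assume "P' \<in> (\<lambda>(P, b). P @ [step b (P ! n)]) ` (walks n \<times> UNIV)"
  then obtain P b where P: "P \<in> walks n" and P': "P' = P @ [step b (P ! n)]"
    by auto
  have "length P = n + 1"
    using P by (simp add: walks_def)
  then show "P' \<in> walks (Suc n)"
    using P unfolding P' walks_def by (auto simp: nth_append less_Suc_eq)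
qed

lemma walk_snoc_eq_iff:
  assumes "P \<in> walks n" "P' \<in> walks n"
  shows "P @ [step b (P ! n)] = P' @ [step b' (P' ! n)] \<longleftrightarrow> P = P' \<and> b = b'"
  using assms by (auto simp: walks_def step_eq_iff)

lemma finite_walks: "finite (walks n)"
  by (induction n) (simp_all add: walks_0 walks_Suc)

lemma meetings_snoc:
  assumes "P \<in> walks n" "Q \<in> walks n"
  shows "meetings (Suc n) (P @ [v]) (Q @ [w]) = meetings n P Q + of_bool (v = w)"
proof -
  have "length P = n + 1" "length Q = n + 1"
    using assms by (simp_all add: walks_def)
  then have "{i \<in> {1..Suc n}. (P @ [v]) ! i = (Q @ [w]) ! i}
      = {i \<in> {1..n}. P ! i = Q ! i} \<union> (if v = w then {Suc n} else {})"
    by (auto simp: nth_append le_Suc_eq)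
  then show ?thesis
    by (simp add: meetings_def)
qed

lemma step_eq_step_iff:
  assumes "P \<in> walks n" "Q \<in> walks n"
  shows "step b (P ! n) = step c (Q ! n) \<longleftrightarrow> fst (step b (P ! n)) = fst (step c (Q ! n))"
  using step_level[of b "P ! n"] step_level[of c "Q ! n"] walks_level[OF assms(1), of n]
    walks_level[OF assms(2), of n]
  by (auto simp: prod_eq_iff)

lemma walk_pairs_snoc_iff:
  assumes "P \<in> walks n" "Q \<in> walks n"
  shows "(P @ [step b (P ! n)], Q @ [step c (Q ! n)]) \<in> walk_pairs (Suc n) r s k \<longleftrightarrow>
     (r = s \<longrightarrow> 1 \<le> k) \<and>
     (P, Q) \<in> walk_pairs n (r - of_bool b) (s - of_bool c) (if r = s then k - 1 else k)"
proof -
  have "length P = n + 1" "length Q = n + 1"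
    using assms by (simp_all add: walks_def)
  then have ends: "(P @ [step b (P ! n)]) ! Suc n = step b (P ! n)" "(Q @ [step c (Q ! n)]) ! Suc n = step c (Q ! n)"
    by (simp_all add: nth_append)
  have "(P @ [step b (P ! n)], Q @ [step c (Q ! n)]) \<in> walks (Suc n) \<times> walks (Suc n)"
    using assms by (auto simp: walks_Suc)
  then show ?thesis
    using assms unfolding walk_pairs_def
    by (auto simp: ends meetings_snoc step_eq_step_iff fst_step)
qed

text \<open>The abscissae are integers so that the recursion may step to \<open>-1\<close>, where the count is 0.\<close>
fun meet_count :: "nat \<Rightarrow> int \<Rightarrow> int \<Rightarrow> nat \<Rightarrow> nat" where
  "meet_count 0 r s k = of_bool (r = 0 \<and> s = 0 \<and> k = 0)"
| "meet_count (Suc n) r s k =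
     (if r = s then
        (if k = 0 then 0
         else meet_count n r s (k - 1) + meet_count n (r - 1) s (k - 1)
            + meet_count n r (s - 1) (k - 1) + meet_count n (r - 1) (s - 1) (k - 1))
      else meet_count n r s k + meet_count n (r - 1) s k
         + meet_count n r (s - 1) k + meet_count n (r - 1) (s - 1) k)"

lemma meet_count_sym: "meet_count n r s k = meet_count n s r k"
  by (induction n arbitrary: r s k) auto

lemma card_walk_pairs: "card (walk_pairs n r s k) = meet_count n r s k"
proof (induction n arbitrary: r s k)
  case 0
  have "walk_pairs 0 r s k = (if r = 0 \<and> s = 0 \<and> k = 0 then {([(0, 0)], [(0, 0)])} else {})"
    by (auto simp: walk_pairs_def walks_0 meetings_def)
  then show ?case
    by simp
next
  case (Suc n)
  define W where "W = walks n \<times> walks n"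
  define extend where "extend = (\<lambda>((b, c), (P, Q)). (P @ [step b (P ! n)], Q @ [step c (Q ! n)]))"
  define k' where "k' = (if r = s then k - 1 else k)"
  have extend_image: "extend ` (UNIV \<times> W) = walks (Suc n) \<times> walks (Suc n)"
    unfolding walks_Suc W_def extend_def by (auto simp: image_iff)
  have extend_inj: "inj_on extend (UNIV \<times> W)"
    by (auto simp: inj_on_def W_def extend_def walk_snoc_eq_iff step_eq_iff)
  have slice: "{PQ \<in> W. extend (bc, PQ) \<in> walk_pairs (Suc n) r s k}
      = (if r = s \<and> k = 0 then {} else walk_pairs n (r - of_bool (fst bc)) (s - of_bool (snd bc)) k')" for bc
  proof (cases bc)
    case (Pair b c)
    have "{PQ \<in> W. extend (bc, PQ) \<in> walk_pairs (Suc n) r s k}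
        = {PQ \<in> W. (r = s \<longrightarrow> 1 \<le> k) \<and> PQ \<in> walk_pairs n (r - of_bool b) (s - of_bool c) k'}"
      using walk_pairs_snoc_iff[of _ n _ b c r s k] by (auto simp: Pair extend_def W_def k'_def)
    also have "\<dots> = (if r = s \<and> k = 0 then {} else walk_pairs n (r - of_bool b) (s - of_bool c) k')"
      by (auto simp: walk_pairs_def W_def)
    finally show ?thesis
      by (simp add: Pair)
  qed
  let ?S = "SIGMA bc:UNIV. {PQ \<in> W. extend (bc, PQ) \<in> walk_pairs (Suc n) r s k}"
  have "walk_pairs (Suc n) r s k \<subseteq> extend ` (UNIV \<times> W)"
    using extend_image by (auto simp: walk_pairs_def)
  then have "walk_pairs (Suc n) r s k = extend ` ?S"
    by blast
  also have "card (extend ` ?S) = card ?S"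
    by (rule card_image, rule inj_on_subset[OF extend_inj]) auto
  also have "\<dots> = (\<Sum>bc\<in>UNIV. card {PQ \<in> W. extend (bc, PQ) \<in> walk_pairs (Suc n) r s k})"
    by (rule card_SigmaI) (auto simp: W_def finite_walks)
  also have "\<dots> = meet_count (Suc n) r s k"
    by (simp add: slice Suc.IH k'_def UNIV_bool flip: UNIV_Times_UNIV)
  finally show ?case .
qed

lemma lattice_paths_eq_walks:
  assumes "r \<le> n"
  shows "lattice_paths r (n - r) = {P \<in> walks n. fst (P ! n) = r}"
proof -
  have "P ! n = (r, n - r) \<longleftrightarrow> fst (P ! n) = r" if "P \<in> walks n" for P
    using walks_level[OF that, of n] by (auto simp: prod_eq_iff)
  then show ?thesis
    using assms by (auto simp: lattice_paths_def walks_def ex_step_iff)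
qed

text \<open>Vertex \<open>i\<close> of a walk lies on the antidiagonal \<open>x + y = i\<close>, so two walks of the same
  length can only share a vertex at the same position.\<close>
lemma common_vertices_walks:
  assumes P: "P \<in> walks n" and Q: "Q \<in> walks n"
  shows "set P \<inter> set Q - {(0, 0)} = (\<lambda>i. P ! i) ` {i \<in> {1..n}. P ! i = Q ! i}"
    and "inj_on (\<lambda>i. P ! i) {i \<in> {1..n}. P ! i = Q ! i}"
proof -
  have len: "length P = n + 1" "length Q = n + 1" and P0: "P ! 0 = (0, 0)"
    using P Q by (simp_all add: walks_def)
  have level: "fst (P ! i) + snd (P ! i) = i" "fst (Q ! i) + snd (Q ! i) = i" if "i \<le> n" for i
    using walks_level[OF P that] walks_level[OF Q that] by simp_all
  show "set P \<inter> set Q - {(0, 0)} = (\<lambda>i. P ! i) ` {i \<in> {1..n}. P ! i = Q ! i}"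
  proof (intro equalityI subsetI)
    fix x assume x: "x \<in> set P \<inter> set Q - {(0, 0)}"
    obtain i j where i: "i < n + 1" "x = P ! i" and j: "j < n + 1" "x = Q ! j"
      using x len by (metis DiffD1 IntD1 IntD2 in_set_conv_nth)
    have "i = j"
      using i j level[of i] level[of j] by simp
    moreover have "i \<noteq> 0"
      using i(2) x P0 by (cases i) auto
    ultimately have "i \<in> {i \<in> {1..n}. P ! i = Q ! i}"
      using i j by auto
    then show "x \<in> (\<lambda>i. P ! i) ` {i \<in> {1..n}. P ! i = Q ! i}"
      using i(2) by (rule rev_image_eqI)
  next
    fix x assume "x \<in> (\<lambda>i. P ! i) ` {i \<in> {1..n}. P ! i = Q ! i}"
    then obtain i where "1 \<le> i" "i \<le> n" "P ! i = Q ! i" "x = P ! i"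
      by auto
    then show "x \<in> set P \<inter> set Q - {(0, 0)}"
      using len level[of i] by (auto simp: in_set_conv_nth intro!: exI[of _ i])
  qed
  show "inj_on (\<lambda>i. P ! i) {i \<in> {1..n}. P ! i = Q ! i}"
  proof (rule inj_onI)
    fix i j
    assume "i \<in> {i \<in> {1..n}. P ! i = Q ! i}" "j \<in> {i \<in> {1..n}. P ! i = Q ! i}" "P ! i = P ! j"
    then show "i = j"
      using level(1)[of i] level(1)[of j] by auto
  qed
qed

lemma card_common_vertices_walks:
  assumes "P \<in> walks n" "Q \<in> walks n"
  shows "card (set P \<inter> set Q - {(0, 0)}) = meetings n P Q"
  unfolding common_vertices_walks(1)[OF assms] meetings_def
  by (rule card_image[OF common_vertices_walks(2)[OF assms]])

lemma card_common_vertices_walks_same_end: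
  assumes "P \<in> walks n" "Q \<in> walks n" "1 \<le> n" "P ! n = Q ! n"
  shows "card (set P \<inter> set Q - {(0, 0), P ! n}) + 1 = meetings n P Q"
proof -
  let ?C = "set P \<inter> set Q - {(0, 0)}"
  have "P ! n \<in> ?C"
    unfolding common_vertices_walks(1)[OF assms(1,2)] using assms(3,4) by auto
  then have "card (?C - {P ! n}) + 1 = card ?C"
    using card_Suc_Diff1[of ?C "P ! n"] by simp
  moreover have "set P \<inter> set Q - {(0, 0), P ! n} = ?C - {P ! n}"
    by auto
  ultimately show ?thesis
    using card_common_vertices_walks[OF assms(1,2)] by simp
qed

lemma Mpairs_eq_card_walk_pairs:
  assumes "1 \<le> n" "r \<le> s" "s \<le> n" "r = s \<longrightarrow> 1 \<le> k"
  shows "Mpairs n r s k = card (walk_pairs n (int r) (int s) k)"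
proof (cases "r = s")
  case False
  have "{(P, Q). P \<in> lattice_paths r (n - r) \<and> Q \<in> lattice_paths s (n - s) \<and>
      card (set P \<inter> set Q - {(0, 0)}) = k} = walk_pairs n (int r) (int s) k"
    using assms by (auto simp: walk_pairs_def lattice_paths_eq_walks card_common_vertices_walks)
  then show ?thesis
    using False by (simp add: Mpairs_def)
next
  case True
  have end_eq: "P ! n = (r, n - r)" if "P \<in> walks n" "fst (P ! n) = r" for P
    using walks_level[OF that(1), of n] that(2) by (auto simp: prod_eq_iff)
  have "card (set P \<inter> set Q - {(0, 0), (r, n - r)}) = k - 1 \<longleftrightarrow> meetings n P Q = k"
    if "P \<in> walks n" "Q \<in> walks n" "fst (P ! n) = r" "fst (Q ! n) = r" for P Q
    using card_common_vertices_walks_same_end[OF that(1,2) assms(1)] end_eq[OF that(1,3)]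
      end_eq[OF that(2,4)] True assms(4) by auto
  then have "{(P, Q). P \<in> lattice_paths r (n - r) \<and> Q \<in> lattice_paths r (n - r) \<and>
      card (set P \<inter> set Q - {(0, 0), (r, n - r)}) = k - 1} = walk_pairs n (int r) (int r) k"
    using assms True by (auto simp: walk_pairs_def lattice_paths_eq_walks)
  then show ?thesis
    using True by (simp add: Mpairs_def Npairs_def)
qed

section \<open>Shift operators\<close>

text \<open>Functions of the walk length \<open>n\<close> and the two end abscissae \<open>r\<close>, \<open>s\<close>.\<close>
type_synonym grid_fun = "int \<Rightarrow> int \<Rightarrow> int \<Rightarrow> real"

definition shift_op :: "real \<Rightarrow> int \<Rightarrow> int \<Rightarrow> int \<Rightarrow> grid_fun \<Rightarrow> grid_fun" where
  "shift_op c a b d f = (\<lambda>n r s. c * f (n - a) (r - b) (s - d))"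

definition op_add :: "(grid_fun \<Rightarrow> grid_fun) \<Rightarrow> (grid_fun \<Rightarrow> grid_fun) \<Rightarrow> grid_fun \<Rightarrow> grid_fun" where
  "op_add A B f = (\<lambda>n r s. A f n r s + B f n r s)"

definition linear_op :: "(grid_fun \<Rightarrow> grid_fun) \<Rightarrow> bool" where
  "linear_op A \<longleftrightarrow> (\<forall>(I :: nat set) c g.
     A (\<lambda>n r s. \<Sum>i\<in>I. c i * g i n r s) = (\<lambda>n r s. \<Sum>i\<in>I. c i * A (g i) n r s))"

lemma linear_op_id: "linear_op id"
  by (simp add: linear_op_def)

lemma linear_shift_op: "linear_op (shift_op c a b d)"
  by (simp add: linear_op_def shift_op_def sum_distrib_left algebra_simps)

lemma linear_op_add: "linear_op A \<Longrightarrow> linear_op B \<Longrightarrow> linear_op (op_add A B)"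
  by (simp add: linear_op_def op_add_def sum.distrib algebra_simps)

lemma shift_op_commute: "shift_op c a b d (shift_op c' a' b' d' f) = shift_op c' a' b' d' (shift_op c a b d f)"
  by (simp add: shift_op_def fun_eq_iff algebra_simps)

lemma funpow_shift_op:
  "(shift_op c a b d ^^ m) f n r s = c ^ m * f (n - int m * a) (r - int m * b) (s - int m * d)"
  by (induction m arbitrary: n r s) (simp_all add: shift_op_def algebra_simps)

lemma funpow_commute:
  assumes "\<And>g. A (B g) = B (A g)"
  shows "B ((A ^^ m) g) = (A ^^ m) (B g)"
  by (induction m) (simp_all add: assms[symmetric])

lemma sum_binomial_pascal:
  fixes X :: "nat \<Rightarrow> nat \<Rightarrow> real"
  shows "(\<Sum>a\<le>k. real (k choose a) * X (Suc a) (k - a)) + (\<Sum>a\<le>k. real (k choose a) * X a (Suc (k - a)))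
       = (\<Sum>a\<le>Suc k. real (Suc k choose a) * X a (Suc k - a))"
proof -
  define Y where "Y a = X a (Suc k - a)" for a
  have "(\<Sum>a\<le>Suc k. real (Suc k choose a) * Y a)
      = (\<Sum>a\<le>k. real (k choose a) * Y (Suc a)) + (Y 0 + (\<Sum>a\<le>k. real (k choose Suc a) * Y (Suc a)))"
    by (subst sum.atMost_Suc_shift) (simp add: sum.distrib algebra_simps)
  also have "Y 0 + (\<Sum>a\<le>k. real (k choose Suc a) * Y (Suc a)) = (\<Sum>a\<le>Suc k. real (k choose a) * Y a)"
    by (subst sum.atMost_Suc_shift) simp
  also have "\<dots> = (\<Sum>a\<le>k. real (k choose a) * Y a)"
    by (simp add: binomial_eq_0)
  also have "(\<Sum>a\<le>k. real (k choose a) * Y (Suc a)) = (\<Sum>a\<le>k. real (k choose a) * X (Suc a) (k - a))"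
    by (auto simp: Y_def intro!: sum.cong)
  also have "(\<Sum>a\<le>k. real (k choose a) * Y a) = (\<Sum>a\<le>k. real (k choose a) * X a (Suc (k - a)))"
    by (auto simp: Y_def Suc_diff_le intro!: sum.cong)
  finally show ?thesis
    by (simp add: Y_def)
qed

lemma funpow_op_add_binomial:
  assumes "linear_op A" "linear_op B" "\<And>g. A (B g) = B (A g)"
  shows "(op_add A B ^^ k) f n r s = (\<Sum>a\<le>k. real (k choose a) * (A ^^ a) ((B ^^ (k - a)) f) n r s)"
proof (induction k arbitrary: n r s)
  case (Suc k)
  have IH: "(op_add A B ^^ k) f = (\<lambda>n r s. \<Sum>a\<le>k. real (k choose a) * (A ^^ a) ((B ^^ (k - a)) f) n r s)"
    using Suc.IH by blast
  have "(op_add A B ^^ Suc k) f n r s = A ((op_add A B ^^ k) f) n r s + B ((op_add A B ^^ k) f) n r s"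
    by (simp add: op_add_def)
  also have "A ((op_add A B ^^ k) f) n r s = (\<Sum>a\<le>k. real (k choose a) * (A ^^ Suc a) ((B ^^ (k - a)) f) n r s)"
    using assms(1) unfolding IH linear_op_def by simp
  also have "B ((op_add A B ^^ k) f) n r s = (\<Sum>a\<le>k. real (k choose a) * (A ^^ a) ((B ^^ Suc (k - a)) f) n r s)"
    using assms(2) unfolding IH linear_op_def by (simp add: funpow_commute[of A B, OF assms(3)])
  finally show ?case
    using sum_binomial_pascal[of k "\<lambda>a b. (A ^^ a) ((B ^^ b) f) n r s"] by simp
qed simp

definition diag_diff :: "grid_fun \<Rightarrow> grid_fun" where
  "diag_diff = op_add (shift_op (-1) 1 0 1) id"

definition U_op :: "real \<Rightarrow> grid_fun \<Rightarrow> grid_fun" where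
  "U_op c = op_add (shift_op c 1 1 0) diag_diff"

definition V_op :: "grid_fun \<Rightarrow> grid_fun" where
  "V_op = op_add (shift_op 1 1 1 1) (shift_op 1 1 0 0)"

lemma funpow_diag_diff:
  "(diag_diff ^^ m) f n r s = (\<Sum>j\<le>m. real (m choose j) * (-1) ^ j * f (n - int j) r (s - int j))"
  unfolding diag_diff_def
  by (subst funpow_op_add_binomial) (simp_all add: linear_shift_op linear_op_id funpow_shift_op ac_simps)

lemma funpow_U_op:
  "(U_op c ^^ k) f n r s = (\<Sum>a\<le>k. real (k choose a) * c ^ a *
     (\<Sum>j\<le>k - a. real (k - a choose j) * (-1) ^ j * f (n - int a - int j) (r - int a) (s - int j)))"
proof -
  have "linear_op diag_diff"
    by (simp add: diag_diff_def linear_op_add linear_shift_op linear_op_id)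
  moreover have "shift_op c 1 1 0 (diag_diff g) = diag_diff (shift_op c 1 1 0 g)" for g
    by (simp add: diag_diff_def op_add_def shift_op_def fun_eq_iff algebra_simps)
  ultimately show ?thesis
    unfolding U_op_def
    by (simp add: funpow_op_add_binomial linear_shift_op funpow_shift_op funpow_diag_diff
        sum_distrib_left ac_simps)
qed

lemma funpow_V_op: "(V_op ^^ k) f n r s = (\<Sum>a\<le>k. real (k choose a) * f (n - int k) (r - int a) (s - int a))"
  unfolding V_op_def
  by (simp add: funpow_op_add_binomial linear_shift_op shift_op_commute funpow_shift_op of_nat_diff)

section \<open>The meeting count as an operator power\<close>

text \<open>A step onto the diagonal \<open>r = s\<close>; the predecessors \<open>(r - 1, s)\<close> and \<open>(r, s - 1)\<close> are
  merged by the symmetry of the meeting count.\<close>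
definition meet_op :: "grid_fun \<Rightarrow> grid_fun" where
  "meet_op f n r s = f (n - 1) r s + f (n - 1) (r - 1) (s - 1) + 2 * f (n - 1) (r - 1) s"

definition defect :: "grid_fun \<Rightarrow> grid_fun" where
  "defect f n r s = f n r s - f (n - 1) r s - f (n - 1) (r - 1) s - f (n - 1) r (s - 1)
                     - f (n - 1) (r - 1) (s - 1)"

definition vanishes_above :: "int \<Rightarrow> grid_fun \<Rightarrow> bool" where
  "vanishes_above N f \<longleftrightarrow> (\<forall>n r s. N < n \<longrightarrow> f n r s = 0)"

lemma U_op_minus_meet_op: "U_op 1 f n r s - meet_op f n r s = defect f n r s"
  by (simp add: U_op_def diag_diff_def op_add_def shift_op_def meet_op_def defect_def)

lemma U_op_minus_V_op: "U_op (-1) f n r s - V_op f n r s = defect f n r s"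
  by (simp add: U_op_def diag_diff_def op_add_def shift_op_def V_op_def defect_def)

lemma defect_meet_op: "defect (meet_op f) = meet_op (defect f)"
  by (simp add: meet_op_def defect_def fun_eq_iff algebra_simps)

lemma defect_V_op: "defect (V_op f) = V_op (defect f)"
  by (simp add: V_op_def op_add_def shift_op_def defect_def fun_eq_iff algebra_simps)

lemma U_op_diff: "U_op c (\<lambda>n r s. f n r s - g n r s) = (\<lambda>n r s. U_op c f n r s - U_op c g n r s)"
  by (simp add: U_op_def diag_diff_def op_add_def shift_op_def fun_eq_iff algebra_simps)

lemma vanishes_above_U_op: "vanishes_above N f \<Longrightarrow> vanishes_above (N + 1) (U_op c f)"
  by (simp add: vanishes_above_def U_op_def diag_diff_def op_add_def shift_op_def)

lemma vanishes_above_meet_op: "vanishes_above N f \<Longrightarrow> vanishes_above (N + 1) (meet_op f)"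
  by (simp add: vanishes_above_def meet_op_def)

lemma vanishes_above_V_op: "vanishes_above N f \<Longrightarrow> vanishes_above (N + 1) (V_op f)"
  by (simp add: vanishes_above_def V_op_def op_add_def shift_op_def)

lemma vanishes_above_funpow:
  assumes "\<And>N f. vanishes_above N f \<Longrightarrow> vanishes_above (N + 1) (A f)" "vanishes_above N g"
  shows "vanishes_above (N + int k) ((A ^^ k) g)"
proof (induction k)
  case (Suc k)
  from assms(1)[OF Suc.IH] show ?case
    by (simp add: algebra_simps)
qed (use assms(2) in simp)

text \<open>Telescoping: \<open>A\<^sup>k\<^sup>+\<^sup>1 g - B\<^sup>k\<^sup>+\<^sup>1 g = A (A\<^sup>k g - B\<^sup>k g) + B\<^sup>k (D g)\<close>.\<close>
lemma vanishes_above_funpow_diff: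
  assumes A_diff: "\<And>f g. A (\<lambda>n r s. f n r s - g n r s) = (\<lambda>n r s. A f n r s - A g n r s)"
    and A_raise: "\<And>N f. vanishes_above N f \<Longrightarrow> vanishes_above (N + 1) (A f)"
    and B_raise: "\<And>N f. vanishes_above N f \<Longrightarrow> vanishes_above (N + 1) (B f)"
    and AB: "\<And>f n r s. A f n r s - B f n r s = D f n r s"
    and DB: "\<And>f. D (B f) = B (D f)"
    and Dg: "vanishes_above 1 (D g)"
  shows "vanishes_above (int k) (\<lambda>n r s. (A ^^ k) g n r s - (B ^^ k) g n r s)"
proof (induction k)
  case (Suc k)
  have "(A ^^ Suc k) g n r s - (B ^^ Suc k) g n r s =
     A (\<lambda>n r s. (A ^^ k) g n r s - (B ^^ k) g n r s) n r s + (B ^^ k) (D g) n r s" for n r s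
    using AB[of "(B ^^ k) g" n r s] funpow_commute[of B D k g, OF DB[symmetric]]
    by (simp add: A_diff)
  moreover have "vanishes_above (int k + 1) (A (\<lambda>n r s. (A ^^ k) g n r s - (B ^^ k) g n r s))"
    using A_raise[OF Suc.IH] .
  moreover have "vanishes_above (1 + int k) ((B ^^ k) (D g))"
    using vanishes_above_funpow[OF B_raise Dg] .
  ultimately show ?case
    by (simp add: vanishes_above_def add.commute)
qed (simp add: vanishes_above_def)

text \<open>For \<open>r < s\<close> this is the Lindstrom-Gessel-Viennot count of the pairs of walks that meet
  only at the origin; the proof uses only its recurrence \<open>defect_lgv_det\<close>.\<close>
definition lgv_det :: grid_fun where
  "lgv_det n r s = ibinom (n - 1) r * ibinom (n - 1) (s - 1) - ibinom (n - 1) (r - 1) * ibinom (n - 1) s"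

definition origin_delta :: grid_fun where
  "origin_delta n r s = (if n = 0 \<and> r = 0 \<and> s = 0 then 1 else 0)"

lemma defect_lgv_det:
  "defect lgv_det n r s = (if n = 1 then of_bool (r = 0 \<and> s = 1) - of_bool (r = 1 \<and> s = 0) else 0)"
proof -
  consider "n \<le> 0" | "n = 1" | "2 \<le> n" by linarith
  then show ?thesis
  proof cases
    case 3
    have "ibinom (n - 1) a = ibinom (n - 2) a + ibinom (n - 2) (a - 1)" for a
      using ibinom_pascal[of "n - 1"] 3 by simp
    then show ?thesis
      using 3 unfolding defect_def lgv_det_def by (simp add: algebra_simps)
  qed (auto simp: defect_def lgv_det_def ibinom_def binomial_eq_0)
qed

lemma lgv_det_eq:
  "lgv_det m a b = of_int (b - a) / of_int m * ibinom m b * ibinom m a"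
proof (cases "1 \<le> m")
  case True
  then have m0: "real_of_int m \<noteq> 0" by simp
  have "of_int m * of_int m * lgv_det m a b =
     (of_int m * ibinom (m - 1) a) * (of_int m * ibinom (m - 1) (b - 1))
     - (of_int m * ibinom (m - 1) (a - 1)) * (of_int m * ibinom (m - 1) b)"
    by (simp add: lgv_det_def algebra_simps)
  also have "\<dots> = of_int m * (of_int (b - a) * ibinom m b * ibinom m a)"
    unfolding ibinom_absorb_comp[OF True, of a] ibinom_absorb_comp[OF True, of b]
      ibinom_absorption[OF True, of a] ibinom_absorption[OF True, of b]
    by (simp add: algebra_simps)
  finally have "of_int m * lgv_det m a b = of_int (b - a) * ibinom m b * ibinom m a"
    using m0 by (simp add: mult.assoc)
  then show ?thesis
    using m0 by (simp add: field_simps)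
qed (auto simp: lgv_det_def ibinom_def)

text \<open>The meeting count for \<open>k = 0\<close> and \<open>r \<le> s\<close>, including \<open>n = 0\<close>.\<close>
definition meet_seed :: grid_fun where
  "meet_seed n r s = lgv_det n r s + origin_delta n r s"

lemma defect_funpow_meet_op_meet_seed:
  assumes "r < s"
  shows "defect ((meet_op ^^ k) meet_seed) n r s = 0"
proof -
  have "\<forall>n r s. r < s \<longrightarrow> (meet_op ^^ k) (defect meet_seed) n r s = 0"
  proof (induction k)
    case 0
    have "defect meet_seed n r s = defect lgv_det n r s + defect origin_delta n r s" for n r s
      by (simp add: defect_def meet_seed_def)
    moreover have "defect origin_delta n r s = - of_bool (n = 1 \<and> r = 0 \<and> s = 1)" if "r < s" for n r s
      using that by (simp add: defect_def origin_delta_def)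
    ultimately show ?case
      by (simp add: defect_lgv_det)
  qed (simp add: meet_op_def)
  then show ?thesis
    using assms funpow_commute[of meet_op defect, OF defect_meet_op[symmetric]] by simp
qed

lemma funpow_meet_op_meet_seed_0:
  "(meet_op ^^ k) meet_seed 0 r s = of_bool (r = 0 \<and> s = 0 \<and> k = 0)"
proof (cases k)
  case (Suc k')
  have "\<forall>n r s. n < 0 \<longrightarrow> (meet_op ^^ j) meet_seed n r s = 0" for j
    by (induction j) (simp_all add: meet_seed_def lgv_det_def origin_delta_def ibinom_def meet_op_def)
  then show ?thesis
    using Suc by (simp add: meet_op_def)
qed (simp add: meet_seed_def lgv_det_def origin_delta_def ibinom_def)

lemma meet_count_eq_funpow_meet_op:
  "r \<le> s \<Longrightarrow> real (meet_count m r s k) = (meet_op ^^ k) meet_seed (int m) r s"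
proof (induction m arbitrary: r s k)
  case 0
  then show ?case
    by (simp add: funpow_meet_op_meet_seed_0)
next
  case (Suc m)
  show ?case
  proof (cases "r = s")
    case diag: True
    show ?thesis
    proof (cases k)
      case 0
      then show ?thesis
        using diag by (simp add: meet_seed_def lgv_det_def origin_delta_def)
    next
      case (Suc k')
      have "real (meet_count (Suc m) r s k)
          = real (meet_count m r r k') + real (meet_count m (r - 1) (r - 1) k') + 2 * real (meet_count m (r - 1) r k')"
        using diag Suc meet_count_sym[of m r "r - 1" k'] by simp
      also have "\<dots> = meet_op ((meet_op ^^ k') meet_seed) (int (Suc m)) r r"
        using Suc.IH by (simp add: meet_op_def[of "(meet_op ^^ k') meet_seed"])
      finally show ?thesis
        using diag Suc by simp
    qed
  next
    case False
    with Suc.prems have "r < s"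
      by simp
    have "real (meet_count (Suc m) r s k)
        = real (meet_count m r s k) + real (meet_count m (r - 1) s k)
          + real (meet_count m r (s - 1) k) + real (meet_count m (r - 1) (s - 1) k)"
      using False by simp
    also have "\<dots> = (meet_op ^^ k) meet_seed (int (Suc m)) r s"
      using Suc.IH \<open>r < s\<close> defect_funpow_meet_op_meet_seed[OF \<open>r < s\<close>, of k "int (Suc m)"]
      by (simp add: defect_def)
    finally show ?thesis .
  qed
qed

lemma meet_count_eq_U_op_V_op:
  assumes "r \<le> s" "k < m"
  shows "real (meet_count m r s k)
       = (V_op ^^ k) lgv_det (int m) r s + (U_op 1 ^^ k) lgv_det (int m) r s - (U_op (-1) ^^ k) lgv_det (int m) r s"
proof -
  have "(meet_op ^^ k) (\<lambda>n r s. f n r s + g n r s) = (\<lambda>n r s. (meet_op ^^ k) f n r s + (meet_op ^^ k) g n r s)"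
    for f g
    by (induction k) (simp_all add: meet_op_def fun_eq_iff algebra_simps)
  moreover have "vanishes_above (0 + int k) ((meet_op ^^ k) origin_delta)"
    by (rule vanishes_above_funpow[OF vanishes_above_meet_op]) (auto simp: vanishes_above_def origin_delta_def)
  ultimately have "real (meet_count m r s k) = (meet_op ^^ k) lgv_det (int m) r s"
    using meet_count_eq_funpow_meet_op[OF assms(1), of m k] assms(2)
    by (simp add: meet_seed_def[abs_def] vanishes_above_def)
  moreover have lgv: "vanishes_above 1 (defect lgv_det)"
    by (simp add: vanishes_above_def defect_lgv_det)
  have "vanishes_above (int k) (\<lambda>n r s. (U_op 1 ^^ k) lgv_det n r s - (meet_op ^^ k) lgv_det n r s)"
    by (rule vanishes_above_funpow_diff[OF U_op_diff vanishes_above_U_op vanishes_above_meet_op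
          U_op_minus_meet_op defect_meet_op lgv])
  moreover have "vanishes_above (int k) (\<lambda>n r s. (U_op (-1) ^^ k) lgv_det n r s - (V_op ^^ k) lgv_det n r s)"
    by (rule vanishes_above_funpow_diff[OF U_op_diff vanishes_above_U_op vanishes_above_V_op
          U_op_minus_V_op defect_V_op lgv])
  ultimately show ?thesis
    using assms(2) unfolding vanishes_above_def by force
qed

section \<open>The closed formula\<close>

lemma funpow_V_op_lgv_det:
  fixes n r s k :: nat
  assumes "k < n"
  shows "(V_op ^^ k) lgv_det (int n) (int r) (int s) = (real s - real r) / (real n - real k) *
        (\<Sum>j\<in>{0..k}. ibinom (int k) (int j) * ibinom (int n - int k) (int r - int j)
                        * ibinom (int n - int k) (int s - int j))"
  using assms unfolding funpow_V_op atMost_atLeast0 sum_distrib_left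
  by (intro sum.cong) (simp_all add: lgv_det_eq ibinom_def)

lemma sum_odd_part:
  fixes h :: "nat \<Rightarrow> real"
  shows "(\<Sum>a\<le>k. (1 - (-1) ^ a) * h a) = 2 * (\<Sum>t\<in>{0..k}. if 2 * t + 1 \<le> k then h (2 * t + 1) else 0)"
proof -
  have "(\<Sum>a\<le>k. (1 - (-1) ^ a) * h a) = (\<Sum>a\<in>{a\<in>{..k}. odd a}. 2 * h a)"
    by (subst sum.inter_filter) (auto intro!: sum.cong)
  also have "{a\<in>{..k}. odd a} = (\<lambda>t. 2 * t + 1) ` {t\<in>{0..k}. 2 * t + 1 \<le> k}"
    by (auto simp: image_iff elim!: oddE)
  also have "(\<Sum>a\<in>(\<lambda>t. 2 * t + 1) ` {t\<in>{0..k}. 2 * t + 1 \<le> k}. 2 * h a)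
      = (\<Sum>t\<in>{t\<in>{0..k}. 2 * t + 1 \<le> k}. 2 * h (2 * t + 1))"
    by (subst sum.reindex) (auto simp: inj_on_def)
  also have "\<dots> = (\<Sum>t\<in>{0..k}. if 2 * t + 1 \<le> k then 2 * h (2 * t + 1) else 0)"
    by (subst sum.inter_filter) auto
  also have "\<dots> = 2 * (\<Sum>t\<in>{0..k}. if 2 * t + 1 \<le> k then h (2 * t + 1) else 0)"
    by (subst sum_distrib_left) (auto intro: sum.cong)
  finally show ?thesis .
qed

lemma funpow_U_op_odd_term:
  fixes n r s k t :: nat
  shows "(if 2 * t + 1 \<le> k then real (k choose (2 * t + 1)) *
            (\<Sum>j\<le>k - (2 * t + 1). real (k - (2 * t + 1) choose j) * (-1) ^ j *
               lgv_det (int n - int (2 * t + 1) - int j) (int r - int (2 * t + 1)) (int s - int j))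
          else 0)
    = (\<Sum>j\<in>{0..k}.
          (-1) ^ j * (real_of_int (int s - int j - int r + 1 + 2 * int t)
                       / real_of_int (int n - 1 - int j - 2 * int t))
          * ibinom (int k) (2 * int t + 1) * ibinom (int k - 1 - 2 * int t) (int j)
          * ibinom (int n - 1 - int j - 2 * int t) (int s - int j)
          * ibinom (int n - 1 - int j - 2 * int t) (int r - 1 - 2 * int t))"
proof (cases "2 * t + 1 \<le> k")
  case False
  then have "ibinom (int k) (2 * int t + 1) = 0"
    by (simp add: ibinom_def binomial_eq_0 nat_add_distrib nat_mult_distrib)
  then show ?thesis
    using False by simp
next
  case True
  define m where "m = k - (2 * t + 1)"
  have km: "int k - 1 - 2 * int t = int m"
    using True by (simp add: m_def)
  have kc: "ibinom (int k) (2 * int t + 1) = real (k choose (2 * t + 1))"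
    by (simp add: ibinom_def nat_add_distrib nat_mult_distrib)
  have "(-1) ^ j * (real_of_int (int s - int j - int r + 1 + 2 * int t)
                       / real_of_int (int n - 1 - int j - 2 * int t))
          * ibinom (int k) (2 * int t + 1) * ibinom (int k - 1 - 2 * int t) (int j)
          * ibinom (int n - 1 - int j - 2 * int t) (int s - int j)
          * ibinom (int n - 1 - int j - 2 * int t) (int r - 1 - 2 * int t)
     = real (k choose (2 * t + 1)) * (ibinom (int m) (int j) * (-1) ^ j *
         lgv_det (int n - int (2 * t + 1) - int j) (int r - int (2 * t + 1)) (int s - int j))" for j
    unfolding km kc lgv_det_eq by (simp add: algebra_simps)
  then have "(\<Sum>j\<in>{0..k}.
          (-1) ^ j * (real_of_int (int s - int j - int r + 1 + 2 * int t)
                       / real_of_int (int n - 1 - int j - 2 * int t))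
          * ibinom (int k) (2 * int t + 1) * ibinom (int k - 1 - 2 * int t) (int j)
          * ibinom (int n - 1 - int j - 2 * int t) (int s - int j)
          * ibinom (int n - 1 - int j - 2 * int t) (int r - 1 - 2 * int t))
    = (\<Sum>j\<in>{0..m}. real (k choose (2 * t + 1)) * (ibinom (int m) (int j) * (-1) ^ j *
         lgv_det (int n - int (2 * t + 1) - int j) (int r - int (2 * t + 1)) (int s - int j)))"
    by (simp, intro sum.mono_neutral_right) (auto simp: m_def ibinom_def)
  also have "\<dots> = real (k choose (2 * t + 1)) * (\<Sum>j\<le>m. real (m choose j) * (-1) ^ j *
         lgv_det (int n - int (2 * t + 1) - int j) (int r - int (2 * t + 1)) (int s - int j))"
    unfolding atMost_atLeast0 sum_distrib_left by (intro sum.cong) (simp_all add: ibinom_def)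
  finally show ?thesis
    using True by (simp add: m_def)
qed

lemma meet_count_formula:
  fixes n r s k :: nat
  assumes "r \<le> s" "k < n"
  shows "real (meet_count n (int r) (int s) k) =
      2 * (\<Sum>t\<in>{0..k}. \<Sum>j\<in>{0..k}.
          (-1) ^ j * (real_of_int (int s - int j - int r + 1 + 2 * int t)
                       / real_of_int (int n - 1 - int j - 2 * int t))
          * ibinom (int k) (2 * int t + 1) * ibinom (int k - 1 - 2 * int t) (int j)
          * ibinom (int n - 1 - int j - 2 * int t) (int s - int j)
          * ibinom (int n - 1 - int j - 2 * int t) (int r - 1 - 2 * int t))
    + (real s - real r) / (real n - real k) *
        (\<Sum>j\<in>{0..k}. ibinom (int k) (int j) * ibinom (int n - int k) (int r - int j)
                        * ibinom (int n - int k) (int s - int j))"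
proof -
  txt \<open>Only the odd powers of the shift by \<open>(1, 1, 0)\<close> survive in the difference.\<close>
  have "(U_op 1 ^^ k) lgv_det (int n) (int r) (int s) - (U_op (-1) ^^ k) lgv_det (int n) (int r) (int s)
      = (\<Sum>a\<le>k. (1 - (-1) ^ a) * (real (k choose a) * (\<Sum>j\<le>k - a. real (k - a choose j) * (-1) ^ j *
           lgv_det (int n - int a - int j) (int r - int a) (int s - int j))))"
    unfolding funpow_U_op sum_subtractf[symmetric] by (intro sum.cong) (simp_all add: algebra_simps)
  also have "\<dots> = 2 * (\<Sum>t\<in>{0..k}. \<Sum>j\<in>{0..k}.
          (-1) ^ j * (real_of_int (int s - int j - int r + 1 + 2 * int t)
                       / real_of_int (int n - 1 - int j - 2 * int t))
          * ibinom (int k) (2 * int t + 1) * ibinom (int k - 1 - 2 * int t) (int j)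
          * ibinom (int n - 1 - int j - 2 * int t) (int s - int j)
          * ibinom (int n - 1 - int j - 2 * int t) (int r - 1 - 2 * int t))"
    unfolding sum_odd_part funpow_U_op_odd_term[symmetric] by (simp add: if_distrib)
  finally show ?thesis
    using meet_count_eq_U_op_V_op[of "int r" "int s" k n] funpow_V_op_lgv_det[of k n r s] assms
    by simp
qed

theorem theorem2:
  fixes n r s k :: nat
  assumes "n \<ge> 1" and "r \<le> s" and "s \<le> n" and "k \<le> n - 1" and "r = s \<longrightarrow> k \<ge> 1"
  shows "real (Mpairs n r s k) =
      2 * (\<Sum>t\<in>{0..k}. \<Sum>j\<in>{0..k}.
          (-1) ^ j * (real_of_int (int s - int j - int r + 1 + 2 * int t)
                       / real_of_int (int n - 1 - int j - 2 * int t))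
          * ibinom (int k) (2 * int t + 1) * ibinom (int k - 1 - 2 * int t) (int j)
          * ibinom (int n - 1 - int j - 2 * int t) (int s - int j)
          * ibinom (int n - 1 - int j - 2 * int t) (int r - 1 - 2 * int t))
    + (real s - real r) / (real n - real k) *
        (\<Sum>j\<in>{0..k}. ibinom (int k) (int j) * ibinom (int n - int k) (int r - int j)
                        * ibinom (int n - int k) (int s - int j))
    \<and> (r < s \<longrightarrow> real (Mpairs n r s 0) =
          (real s - real r) / real n * real (n choose r) * real (n choose s))"
proof -
  have "real (Mpairs n r s j) = real (meet_count n (int r) (int s) j)" if "r = s \<longrightarrow> 1 \<le> j" for j
    using Mpairs_eq_card_walk_pairs[OF assms(1-3) that] card_walk_pairs by simp
  moreover have "k < n"
    using assms(1,4) by simp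
  ultimately show ?thesis
    using meet_count_formula[OF assms(2)] assms(1,5) by (simp add: ibinom_def)
qed

end
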